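(* Let $w\in(1,\infty)$ and $\delta\in(0,1)$. Define the CI reporting procedure $\Phi$ by: for input $(S,\mathbf C)$ with $S\subseteq[K]$, $\mathbf C\in\mathrm{ECI}_K$, if $(S,\mathbf C)\in\Sigma(w)$ report $C_i(w\delta|S|/K)$ for $i\in S$, and otherwise report $C_i(\delta|S|/K)$ for $i\in S$. Then for every random selection $\mathcal S$, e-value families $E_1,\dots,E_K$ and true parameter $\boldsymbol\theta$, $$\mathrm{FCR}(\Phi)=\mathbb{E}\left[\frac{\sum_{i\in\mathcal S}\mathbf 1\{\theta_i\notin\Phi(\mathcal S,\mathbf C^{\mathbf E})_i\}}{|\mathcal S|\vee1}\right]\le\delta .$$
   Context: Fix $K$ and parameter spaces $\Theta_1,\dots,\Theta_K$; the probability space carries a random variable that is standard uniform under every parameter. An e-value family for $\Theta_i$ is $(E_i(\theta))_{\theta\in\Theta_i}$ with $E_i(\theta)\ge0$ and $\mathbb{E}[E_i(\theta)]\le1$ whenever $\theta$ is the true value of $\theta_i$; $C^{\mathbf E}_i(\alpha)=\{\theta\in\Theta_i:E_i(\theta)<1/\alpha\}$ ($1/0=\infty$). $\mathrm{ECI}_K$ is the set of tuples $\mathbf C=(C_1,\dots,C_K)$ where each $C_i:[0,1]\to2^{\Theta_i}$ is nonincreasing with $C_i(\alpha)=\bigcup_{\beta>\alpha}C_i(\beta)$ for $\alpha\in[0,1)$ (the possible realizations of such e-CIs). For $\mathbf C\in\mathrm{ECI}_K$ let $t_i(\theta)=\sup\{1/\alpha:\alpha\in[0,1),\theta\notin C_i(\alpha)\}$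 (with $\sup\emptyset=1$). For $S\ne\emptyset,[K]$ let $\gamma(S,\mathbf C)=\sum_{i\in S}\sup_{\theta\in\Theta_i}t_i(\theta)$, $\lambda(S,\mathbf C)=\sum_{i\in[K]\setminus S}\inf_{\theta\in\Theta_i}\big(t_i(\theta)\mathbf 1\{t_i(\theta)>1\}\big)$, and $v(S,\mathbf C)=1+\lambda(S,\mathbf C)/\gamma(S,\mathbf C)$ with $\infty/\infty=0$. $\Sigma(w)=\{(S,\mathbf C): S\ne\emptyset,[K],\ v(S,\mathbf C)\ge w\}$. A random selection $\mathcal S$ is any $2^{[K]}$-valued random variable, and $\Phi$ is applied to $(\mathcal S,\mathbf C^{\mathbf E})$. *)

theory Defs
  imports "HOL-Probability.Probability"
begin

text \<open>All parameters live in one ambient type 'a;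
  the i-th parameter space is Theta i :: 'a set.\<close>

definition ECI :: "nat \<Rightarrow> (nat \<Rightarrow> 'a set) \<Rightarrow> (nat \<Rightarrow> real \<Rightarrow> 'a set) \<Rightarrow> bool" where
  "ECI K Theta C \<longleftrightarrow>
     (\<forall>i\<in>{1..K}.
        (\<forall>\<alpha>\<in>{0..1}. C i \<alpha> \<subseteq> Theta i) \<and>
        (\<forall>\<alpha>\<in>{0..1}. \<forall>\<beta>\<in>{0..1}. \<alpha> \<le> \<beta> \<longrightarrow> C i \<beta> \<subseteq> C i \<alpha>) \<and>
        (\<forall>\<alpha>\<in>{0..<1}. C i \<alpha> = (\<Union>\<beta>\<in>{\<alpha><..1}. C i \<beta>)))"

text \<open>The realized e-CI: C^E_i(alpha) = {theta in Theta_i : E_i(theta) < 1/alpha}, 1/0 = infinity.\<close>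
definition CE :: "(nat \<Rightarrow> 'a set) \<Rightarrow> (nat \<Rightarrow> 'a \<Rightarrow> 'w \<Rightarrow> real) \<Rightarrow> 'w \<Rightarrow> nat \<Rightarrow> real \<Rightarrow> 'a set" where
  "CE Theta E \<omega> i \<alpha> = {\<theta> \<in> Theta i. \<alpha> = 0 \<or> E i \<theta> \<omega> < 1 / \<alpha>}"

definition tfun :: "(nat \<Rightarrow> real \<Rightarrow> 'a set) \<Rightarrow> nat \<Rightarrow> 'a \<Rightarrow> ereal" where
  "tfun C i \<theta> =
     (let A = {\<alpha> \<in> {0..<1}. \<theta> \<notin> C i \<alpha>} in
      if A = {} then 1
      else Sup ((\<lambda>\<alpha>. if \<alpha> = 0 then \<infinity> else ereal (1 / \<alpha>)) ` A))"

definition gammaS :: "(nat \<Rightarrow> 'a set) \<Rightarrow> nat set \<Rightarrow> (nat \<Rightarrow> real \<Rightarrow> 'a set) \<Rightarrow> ereal" where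
  "gammaS Theta S C = (\<Sum>i\<in>S. (SUP \<theta>\<in>Theta i. tfun C i \<theta>))"

definition lambdaS :: "nat \<Rightarrow> (nat \<Rightarrow> 'a set) \<Rightarrow> nat set \<Rightarrow> (nat \<Rightarrow> real \<Rightarrow> 'a set) \<Rightarrow> ereal" where
  "lambdaS K Theta S C =
     (\<Sum>i\<in>{1..K} - S. (INF \<theta>\<in>Theta i. (if tfun C i \<theta> > 1 then tfun C i \<theta> else 0)))"

definition vS :: "nat \<Rightarrow> (nat \<Rightarrow> 'a set) \<Rightarrow> nat set \<Rightarrow> (nat \<Rightarrow> real \<Rightarrow> 'a set) \<Rightarrow> ereal" where
  "vS K Theta S C =
     (let l = lambdaS K Theta S C; g = gammaS Theta S C in
      1 + (if l = \<infinity> \<and> g = \<infinity> then 0 else l / g))"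

definition SigmaW :: "nat \<Rightarrow> (nat \<Rightarrow> 'a set) \<Rightarrow> real \<Rightarrow> (nat set \<times> (nat \<Rightarrow> real \<Rightarrow> 'a set)) set" where
  "SigmaW K Theta w =
     {(S, C). S \<subseteq> {1..K} \<and> ECI K Theta C \<and> S \<noteq> {} \<and> S \<noteq> {1..K} \<and> vS K Theta S C \<ge> ereal w}"

definition Phi :: "nat \<Rightarrow> (nat \<Rightarrow> 'a set) \<Rightarrow> real \<Rightarrow> real \<Rightarrow> nat set \<Rightarrow> (nat \<Rightarrow> real \<Rightarrow> 'a set) \<Rightarrow> nat \<Rightarrow> 'a set" where
  "Phi K Theta w \<delta> S C i =
     (if (S, C) \<in> SigmaW K Theta w then C i (w * \<delta> * real (card S) / real K)
      else C i (\<delta> * real (card S) / real K))"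

end

theory Submission
  imports Defs
begin

(* Pointwise in \<omega>, the false coverage proportion of Phi is at most (\<delta>/K) \<Sum>_{i\<in>[K]} E_i(\<theta>_i);
   taking expectations with E[E_i(\<theta>_i)] \<le> 1 gives FCR \<le> \<delta>.
   Pointwise, \<theta>_i \<notin> C^E_i(\<alpha>) means \<alpha> E_i(\<theta>_i) \<ge> 1, so at level c \<delta> |S|/K there are at most
   c \<delta> |S|/K \<Sum>_{i\<in>S} E_i(\<theta>_i) misses. For c = 1 this suffices. For c = w we use (S, C^E) \<in> \<Sigma>(w):
   the realised e-CIs have t_i(\<theta>) = max 1 (E_i(\<theta>)), so \<gamma> \<ge> \<Sum>_{i\<in>S} E_i(\<theta>_i) and
   \<lambda> \<le> \<Sum>_{i\<notin>S} E_i(\<theta>_i), and v \<ge> w becomes w \<Sum>_{i\<in>S} E_i(\<theta>_i) \<le> \<Sum>_{i\<in>[K]} E_i(\<theta>_i).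
   Phi is deterministic. *)

lemma tfun_CE:
  assumes "t \<in> Theta i"
  shows "tfun (CE Theta E \<omega>) i t = ereal (max 1 (E i t \<omega>))"
proof -
  define A where "A = {\<alpha> \<in> {0..<1::real}. t \<notin> CE Theta E \<omega> i \<alpha>}"
  have A: "A = {\<alpha>. 0 < \<alpha> \<and> \<alpha> < 1 \<and> 1 / \<alpha> \<le> E i t \<omega>}"
    using assms by (auto simp: A_def CE_def not_less)
  have tfun_A: "tfun (CE Theta E \<omega>) i t
      = (if A = {} then 1 else Sup ((\<lambda>\<alpha>. if \<alpha> = 0 then \<infinity> else ereal (1 / \<alpha>)) ` A))"
    unfolding tfun_def Let_def A_def ..
  show ?thesis
  proof (cases "E i t \<omega> \<le> 1")
    case True
    have "A = {}"
    proof (rule equals0I)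
      fix \<alpha> assume "\<alpha> \<in> A"
      then have "1 < 1 / \<alpha>" "1 / \<alpha> \<le> E i t \<omega>" by (auto simp: A)
      with True show False by simp
    qed
    with True show ?thesis by (simp add: tfun_A)
  next
    case False
    then have inv_in_A: "1 / E i t \<omega> \<in> A" by (auto simp: A)
    have "Sup ((\<lambda>\<alpha>. if \<alpha> = 0 then \<infinity> else ereal (1 / \<alpha>)) ` A) = ereal (E i t \<omega>)"
    proof (rule antisym)
      show "Sup ((\<lambda>\<alpha>. if \<alpha> = 0 then \<infinity> else ereal (1 / \<alpha>)) ` A) \<le> ereal (E i t \<omega>)"
        by (rule Sup_least) (auto simp: A)
      show "ereal (E i t \<omega>) \<le> Sup ((\<lambda>\<alpha>. if \<alpha> = 0 then \<infinity> else ereal (1 / \<alpha>)) ` A)"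
        using False by (intro Sup_upper2[OF imageI[OF inv_in_A]]) auto
    qed
    with False inv_in_A show ?thesis by (auto simp: tfun_A)
  qed
qed

lemma vS_ge_imp_lambdaS_ge:
  assumes v: "ereal w \<le> vS K Theta S C" and w: "1 < w"
    and G: "0 < G" "ereal G \<le> gammaS Theta S C"
    and L: "lambdaS K Theta S C \<le> ereal L"
  shows "(w - 1) * G \<le> L"
proof -
  define l where "l = lambdaS K Theta S C"
  define g where "g = gammaS Theta S C"
  have l_fin: "l \<noteq> \<infinity>" using L by (auto simp: l_def)
  then have v': "ereal w \<le> 1 + l / g" using v by (simp add: vS_def l_def g_def Let_def)
  have "g \<noteq> \<infinity>"
  proof
    assume "g = \<infinity>"
    then have "l / g = 0" using l_fin by (cases l) auto
    with v' w show False by simp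
  qed
  moreover have "ereal G \<le> g" using G by (simp add: g_def)
  ultimately obtain g' where g': "g = ereal g'" "G \<le> g'" by (cases g) auto
  with G have "0 < g'" by simp
  obtain l' where l': "l = ereal l'" "l' \<le> L"
    using L v' g' \<open>0 < g'\<close> w by (cases l) (auto simp: l_def)
  have "w \<le> 1 + l' / g'" using v' l' g' \<open>0 < g'\<close> by simp
  with \<open>0 < g'\<close> have "(w - 1) * g' \<le> l'" by (simp add: field_simps)
  moreover have "(w - 1) * G \<le> (w - 1) * g'" using g' w by (intro mult_left_mono) auto
  ultimately show ?thesis using l' by linarith
qed

lemma sum_max_le_gammaS_CE:
  assumes "\<forall>i\<in>S. \<theta> i \<in> Theta i"
  shows "ereal (\<Sum>i\<in>S. max 1 (E i (\<theta> i) \<omega>)) \<le> gammaS Theta S (CE Theta E \<omega>)"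
  unfolding gammaS_def sum_ereal[symmetric]
proof (rule sum_mono)
  fix i assume "i \<in> S"
  with assms show "ereal (max 1 (E i (\<theta> i) \<omega>)) \<le> (SUP t\<in>Theta i. tfun (CE Theta E \<omega>) i t)"
    by (intro SUP_upper2[of "\<theta> i"]) (auto simp: tfun_CE)
qed

lemma lambdaS_CE_le_sum:
  assumes "\<forall>i\<in>{1..K} - S. \<theta> i \<in> Theta i \<and> 0 \<le> E i (\<theta> i) \<omega>"
  shows "lambdaS K Theta S (CE Theta E \<omega>) \<le> ereal (\<Sum>i\<in>{1..K} - S. E i (\<theta> i) \<omega>)"
  unfolding lambdaS_def sum_ereal[symmetric]
proof (rule sum_mono)
  fix i assume "i \<in> {1..K} - S"
  with assms show "(INF t\<in>Theta i. if 1 < tfun (CE Theta E \<omega>) i t then tfun (CE Theta E \<omega>) i t else 0)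
      \<le> ereal (E i (\<theta> i) \<omega>)"
    by (intro INF_lower2[of "\<theta> i"]) (auto simp: tfun_CE max_def)
qed

lemma SigmaW_CE_imp_weighted_sum_le:
  assumes \<Sigma>: "(S, CE Theta E \<omega>) \<in> SigmaW K Theta w" and w: "1 < w"
    and \<theta>: "\<forall>i\<in>{1..K}. \<theta> i \<in> Theta i \<and> 0 \<le> E i (\<theta> i) \<omega>"
  shows "w * (\<Sum>i\<in>S. E i (\<theta> i) \<omega>) \<le> (\<Sum>i\<in>{1..K}. E i (\<theta> i) \<omega>)"
proof -
  from \<Sigma> have S: "S \<subseteq> {1..K}" "S \<noteq> {}" and v: "ereal w \<le> vS K Theta S (CE Theta E \<omega>)"
    by (auto simp: SigmaW_def)
  have "finite S" using S(1) finite_subset by blast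
  define G where "G = (\<Sum>i\<in>S. max 1 (E i (\<theta> i) \<omega>))"
  have "0 < G" unfolding G_def using \<open>finite S\<close> S(2) by (intro sum_pos) auto
  moreover have "ereal G \<le> gammaS Theta S (CE Theta E \<omega>)"
    unfolding G_def using S(1) \<theta> by (intro sum_max_le_gammaS_CE) auto
  moreover have "lambdaS K Theta S (CE Theta E \<omega>) \<le> ereal (\<Sum>i\<in>{1..K} - S. E i (\<theta> i) \<omega>)"
    using \<theta> by (intro lambdaS_CE_le_sum) auto
  ultimately have "(w - 1) * G \<le> (\<Sum>i\<in>{1..K} - S. E i (\<theta> i) \<omega>)"
    by (rule vS_ge_imp_lambdaS_ge[OF v w])
  moreover have "(w - 1) * (\<Sum>i\<in>S. E i (\<theta> i) \<omega>) \<le> (w - 1) * G"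
    unfolding G_def using w by (intro mult_left_mono sum_mono) auto
  moreover have "(\<Sum>i\<in>{1..K}. E i (\<theta> i) \<omega>)
      = (\<Sum>i\<in>S. E i (\<theta> i) \<omega>) + (\<Sum>i\<in>{1..K} - S. E i (\<theta> i) \<omega>)"
    using S(1) by (simp add: sum.subset_diff)
  ultimately show ?thesis by (simp add: algebra_simps)
qed

lemma indicator_notin_CE_le:
  assumes "t \<in> Theta i" "0 < \<alpha>" "0 \<le> E i t \<omega>"
  shows "(if t \<notin> CE Theta E \<omega> i \<alpha> then 1 else 0) \<le> \<alpha> * E i t \<omega>"
proof (cases "t \<in> CE Theta E \<omega> i \<alpha>")
  case False
  with assms have "1 / \<alpha> \<le> E i t \<omega>" by (auto simp: CE_def not_less)
  with assms(2) have "1 \<le> \<alpha> * E i t \<omega>" by (simp add: field_simps)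
  with False show ?thesis by simp
qed (use assms in simp)

lemma false_coverage_proportion_le:
  assumes S: "S \<subseteq> {1..K}" and w: "1 < w" and \<delta>: "0 < \<delta>"
    and \<theta>: "\<forall>i\<in>{1..K}. \<theta> i \<in> Theta i \<and> 0 \<le> E i (\<theta> i) \<omega>"
  shows "(\<Sum>i\<in>S. if \<theta> i \<notin> Phi K Theta w \<delta> S (CE Theta E \<omega>) i then 1 else 0)
           / max (real (card S)) 1 \<le> \<delta> / real K * (\<Sum>i\<in>{1..K}. E i (\<theta> i) \<omega>)"
proof (cases "S = {}")
  case True
  have "0 \<le> (\<Sum>i\<in>{1..K}. E i (\<theta> i) \<omega>)" using \<theta> by (intro sum_nonneg) auto
  with True \<delta> show ?thesis by simp
next
  case False
  have "finite S" using S finite_subset by blast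
  with False have "0 < card S" by (simp add: card_gt_0_iff)
  from False S have "0 < K" by auto
  define c where "c = (if (S, CE Theta E \<omega>) \<in> SigmaW K Theta w then w else 1)"
  define \<alpha> where "\<alpha> = c * \<delta> * real (card S) / real K"
  have "w * (\<Sum>i\<in>S. E i (\<theta> i) \<omega>) \<le> (\<Sum>i\<in>{1..K}. E i (\<theta> i) \<omega>)"
    if "(S, CE Theta E \<omega>) \<in> SigmaW K Theta w"
    using that w \<theta> by (rule SigmaW_CE_imp_weighted_sum_le)
  moreover have "(\<Sum>i\<in>S. E i (\<theta> i) \<omega>) \<le> (\<Sum>i\<in>{1..K}. E i (\<theta> i) \<omega>)"
    using S \<theta> by (intro sum_mono2) auto
  ultimately have c: "0 < c" "c * (\<Sum>i\<in>S. E i (\<theta> i) \<omega>) \<le> (\<Sum>i\<in>{1..K}. E i (\<theta> i) \<omega>)"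
    using w by (auto simp: c_def)
  have "0 < \<alpha>" using c \<delta> \<open>0 < card S\<close> \<open>0 < K\<close> by (simp add: \<alpha>_def)
  have "(\<Sum>i\<in>S. if \<theta> i \<notin> Phi K Theta w \<delta> S (CE Theta E \<omega>) i then 1 else 0)
      = (\<Sum>i\<in>S. if \<theta> i \<notin> CE Theta E \<omega> i \<alpha> then 1 else 0)"
    by (simp add: Phi_def c_def \<alpha>_def)
  also have "\<dots> \<le> \<alpha> * (\<Sum>i\<in>S. E i (\<theta> i) \<omega>)"
    unfolding sum_distrib_left using S \<theta> \<open>0 < \<alpha>\<close> by (intro sum_mono indicator_notin_CE_le) auto
  finally have "(\<Sum>i\<in>S. if \<theta> i \<notin> Phi K Theta w \<delta> S (CE Theta E \<omega>) i then 1 else 0)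
      / max (real (card S)) 1 \<le> \<alpha> * (\<Sum>i\<in>S. E i (\<theta> i) \<omega>) / real (card S)"
    using \<open>0 < card S\<close> by (simp add: divide_right_mono)
  also have "\<dots> = \<delta> / real K * (c * (\<Sum>i\<in>S. E i (\<theta> i) \<omega>))"
    using \<open>0 < card S\<close> by (simp add: \<alpha>_def)
  also have "\<dots> \<le> \<delta> / real K * (\<Sum>i\<in>{1..K}. E i (\<theta> i) \<omega>)"
    using c \<delta> by (intro mult_left_mono) auto
  finally show ?thesis .
qed

lemma nn_integral_sum_le_card:
  assumes "\<And>i. i \<in> I \<Longrightarrow> f i \<in> borel_measurable M"
    and "\<And>i. i \<in> I \<Longrightarrow> (\<integral>\<^sup>+x. f i x \<partial>M) \<le> 1"
  shows "(\<integral>\<^sup>+x. (\<Sum>i\<in>I. f i x) \<partial>M) \<le> of_nat (card I)"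
proof -
  have "(\<integral>\<^sup>+x. (\<Sum>i\<in>I. f i x) \<partial>M) = (\<Sum>i\<in>I. \<integral>\<^sup>+x. f i x \<partial>M)"
    using assms(1) by (rule nn_integral_sum)
  also have "\<dots> \<le> (\<Sum>i\<in>I. 1)" using assms(2) by (rule sum_mono)
  finally show ?thesis by simp
qed

theorem proposition5:
  fixes K :: nat
    and Theta :: "nat \<Rightarrow> 'a set"
    and P :: "(nat \<Rightarrow> 'a) \<Rightarrow> 'w measure"
    and E :: "nat \<Rightarrow> 'a \<Rightarrow> 'w \<Rightarrow> real"
    and Ssel :: "'w \<Rightarrow> nat set"
    and \<theta> :: "nat \<Rightarrow> 'a"
    and w \<delta> :: real
  assumes prob: "\<forall>th\<in>Pi\<^sub>E {1..K} Theta. prob_space (P th)"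
    and unif: "\<exists>U::'w \<Rightarrow> real. \<forall>th\<in>Pi\<^sub>E {1..K} Theta.
                 U \<in> borel_measurable (P th) \<and>
                 distr (P th) lborel U = uniform_measure lborel {0..1}"
    and evalue: "\<forall>i\<in>{1..K}. \<forall>t\<in>Theta i. \<forall>th\<in>Pi\<^sub>E {1..K} Theta.
                   E i t \<in> borel_measurable (P th) \<and>
                   (\<forall>\<omega>\<in>space (P th). E i t \<omega> \<ge> 0) \<and>
                   (th i = t \<longrightarrow> (\<integral>\<^sup>+\<omega>. ennreal (E i t \<omega>) \<partial>P th) \<le> 1)"
    and sel: "\<forall>th\<in>Pi\<^sub>E {1..K} Theta. Ssel \<in> measurable (P th) (count_space (Pow {1..K}))"
    and truth: "\<theta> \<in> Pi\<^sub>E {1..K} Theta"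
    and w: "w > 1"
    and \<delta>: "0 < \<delta>" "\<delta> < 1"
  shows "(\<integral>\<^sup>+\<omega>. ennreal
            ((\<Sum>i\<in>Ssel \<omega>. if \<theta> i \<notin> Phi K Theta w \<delta> (Ssel \<omega>) (CE Theta E \<omega>) i then 1 else 0)
             / max (real (card (Ssel \<omega>))) 1) \<partial>P \<theta>) \<le> ennreal \<delta>"
proof -
  have "\<theta> i \<in> Theta i" if "i \<in> {1..K}" for i using truth that by auto
  with evalue truth have E: "E i (\<theta> i) \<in> borel_measurable (P \<theta>)"
      "\<forall>\<omega>\<in>space (P \<theta>). \<theta> i \<in> Theta i \<and> 0 \<le> E i (\<theta> i) \<omega>"
      "(\<integral>\<^sup>+\<omega>. ennreal (E i (\<theta> i) \<omega>) \<partial>P \<theta>) \<le> 1" if "i \<in> {1..K}" for i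
    using that by blast+
  have "(\<integral>\<^sup>+\<omega>. ennreal
            ((\<Sum>i\<in>Ssel \<omega>. if \<theta> i \<notin> Phi K Theta w \<delta> (Ssel \<omega>) (CE Theta E \<omega>) i then 1 else 0)
             / max (real (card (Ssel \<omega>))) 1) \<partial>P \<theta>)
      \<le> (\<integral>\<^sup>+\<omega>. ennreal (\<delta> / real K) * (\<Sum>i\<in>{1..K}. ennreal (E i (\<theta> i) \<omega>)) \<partial>P \<theta>)"
  proof (rule nn_integral_mono)
    fix \<omega> assume \<omega>: "\<omega> \<in> space (P \<theta>)"
    then have "Ssel \<omega> \<subseteq> {1..K}" using measurable_space[OF sel[rule_format, OF truth]] by auto
    have E_nonneg: "\<forall>i\<in>{1..K}. \<theta> i \<in> Theta i \<and> 0 \<le> E i (\<theta> i) \<omega>" using E(2) \<omega> by blast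
    with w \<delta> \<open>Ssel \<omega> \<subseteq> {1..K}\<close> have "(\<Sum>i\<in>Ssel \<omega>. if \<theta> i \<notin> Phi K Theta w \<delta> (Ssel \<omega>) (CE Theta E \<omega>) i then 1 else 0)
             / max (real (card (Ssel \<omega>))) 1 \<le> \<delta> / real K * (\<Sum>i\<in>{1..K}. E i (\<theta> i) \<omega>)"
      by (intro false_coverage_proportion_le) auto
    moreover have "ennreal (\<delta> / real K) * (\<Sum>i\<in>{1..K}. ennreal (E i (\<theta> i) \<omega>))
        = ennreal (\<delta> / real K * (\<Sum>i\<in>{1..K}. E i (\<theta> i) \<omega>))"
    proof -
      have "(\<Sum>i\<in>{1..K}. ennreal (E i (\<theta> i) \<omega>)) = ennreal (\<Sum>i\<in>{1..K}. E i (\<theta> i) \<omega>)"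
        using E_nonneg by (intro sum_ennreal) auto
      moreover have "0 \<le> (\<Sum>i\<in>{1..K}. E i (\<theta> i) \<omega>)" using E_nonneg by (intro sum_nonneg) auto
      ultimately show ?thesis by (metis ennreal_mult'')
    qed
    ultimately show "ennreal ((\<Sum>i\<in>Ssel \<omega>. if \<theta> i \<notin> Phi K Theta w \<delta> (Ssel \<omega>) (CE Theta E \<omega>) i then 1 else 0)
             / max (real (card (Ssel \<omega>))) 1) \<le> ennreal (\<delta> / real K) * (\<Sum>i\<in>{1..K}. ennreal (E i (\<theta> i) \<omega>))"
      by (simp add: ennreal_leI)
  qed
  also have "\<dots> = ennreal (\<delta> / real K) * (\<integral>\<^sup>+\<omega>. (\<Sum>i\<in>{1..K}. ennreal (E i (\<theta> i) \<omega>)) \<partial>P \<theta>)"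
    using E(1) by (intro nn_integral_cmult borel_measurable_sum measurable_compose[OF _ measurable_ennreal]) auto
  also have "\<dots> \<le> ennreal (\<delta> / real K) * of_nat (card {1..K})"
    using E(1,3) by (intro mult_left_mono nn_integral_sum_le_card measurable_compose[OF _ measurable_ennreal]) auto
  also have "\<dots> \<le> ennreal \<delta>"
    using \<delta> by (cases "K = 0") (auto simp: ennreal_of_nat_eq_real_of_nat ennreal_mult[symmetric])
  finally show ?thesis .
qed

end
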